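(* Let $X_1,\dots,X_n$ be i.i.d. real random variables whose common distribution is symmetric about an unknown $\mu\in\mathbb{R}$ (i.e. $X_1-\mu$ and $\mu-X_1$ have the same distribution). Fix integers $k\le n$ and $1\le r\le m$, and let $R(\theta)$ be the one-sided resampled median-of-means rank defined in the context. Then $$\mathbb{P}\big(R(\mu)>m-r\big)=\frac{r}{m}.$$
   Context: Blocks: for $\ell=1,\dots,k$ let $B_\ell=\{i\in[n]: i\equiv \ell \pmod k\}$, so each $|B_\ell|\ge \lfloor n/k\rfloor$. Median: for reals $y_1,\dots,y_k$ with order statistics $y_{(1)}\le\dots\le y_{(k)}$, $\mathrm{med}(y_1,\dots,y_k)=y_{(k/2)}$ if $k$ is even and $y_{(\lfloor k/2\rfloor+1)}$ if $k$ is odd. Median-of-means: for $x=(x_1,\dots,x_n)$, $\widehat\mu(x)=\mathrm{med}\big(\frac{1}{|B_1|}\sum_{i\in B_1}x_i,\dots,\frac{1}{|B_k|}\sum_{i\in B_k}x_i\big)$. Randomization: $\{\alpha_{i,j}\}_{i\in[n],j\in[m-1]}$ are i.i.d. Rademacher signs ($\pm1$ with probability $1/2$) independent of the data, and $\pi$ is a uniformly random permutation of $\{0,1,\dots,m-1\}$ independent of the data and of the signs. For $\theta\in\mathbb{R}$: $\mathcal{D}_0(\theta)=(X_1,\dots,X_n)$ and $\mathcal{D}_j(\theta)=(\alpha_{1,j}(X_1-\theta)+\theta,\dots,\alpha_{n,j}(X_n-\theta)+\theta)$ for $j\in[m-1]$ (the same signs are used for every $\theta$). Reference variables: $S_j(\theta)=\widehat\mu(\mathcal{D}_j(\theta))-\theta$,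 $j=0,\dots,m-1$. Tie-broken order: $S_j(\theta)\prec_\pi S_l(\theta)$ iff $S_j(\theta)<S_l(\theta)$, or $S_j(\theta)=S_l(\theta)$ and $\pi(j)<\pi(l)$. Rank: $R(\theta)=1+\sum_{j=1}^{m-1}\mathbb{I}\big(S_0(\theta)\prec_\pi S_j(\theta)\big)$. *)

theory Defs
  imports "HOL-Probability.Probability" "HOL-Combinatorics.Permutations"
begin

definition med :: "real list \<Rightarrow> real" where
  "med ys = (let zs = sort ys; k = length ys in
     if even k then zs ! (k div 2 - 1) else zs ! (k div 2))"

definition block :: "nat \<Rightarrow> nat \<Rightarrow> nat \<Rightarrow> nat set" where
  "block n k l = {i \<in> {1..n}. i mod k = l mod k}"

definition mom :: "nat \<Rightarrow> nat \<Rightarrow> (nat \<Rightarrow> real) \<Rightarrow> real" where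
  "mom n k x = med (map (\<lambda>l. (\<Sum>i\<in>block n k l. x i) / real (card (block n k l))) [1..<k+1])"

definition resample :: "(nat \<Rightarrow> nat \<Rightarrow> real) \<Rightarrow> (nat \<Rightarrow> real) \<Rightarrow> real \<Rightarrow> nat \<Rightarrow> nat \<Rightarrow> real" where
  "resample \<alpha> x \<theta> j i = (if j = 0 then x i else \<alpha> i j * (x i - \<theta>) + \<theta>)"

definition refvar :: "nat \<Rightarrow> nat \<Rightarrow> (nat \<Rightarrow> nat \<Rightarrow> real) \<Rightarrow> (nat \<Rightarrow> real) \<Rightarrow> real \<Rightarrow> nat \<Rightarrow> real" where
  "refvar n k \<alpha> x \<theta> j = mom n k (resample \<alpha> x \<theta> j) - \<theta>"

definition prec_pi :: "(nat \<Rightarrow> nat) \<Rightarrow> real \<Rightarrow> nat \<Rightarrow> real \<Rightarrow> nat \<Rightarrow> bool" where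
  "prec_pi \<pi> a j b l \<longleftrightarrow> a < b \<or> (a = b \<and> \<pi> j < \<pi> l)"

definition rank :: "nat \<Rightarrow> nat \<Rightarrow> nat \<Rightarrow> (nat \<Rightarrow> nat \<Rightarrow> real) \<Rightarrow> (nat \<Rightarrow> nat) \<Rightarrow> (nat \<Rightarrow> real) \<Rightarrow> real \<Rightarrow> nat" where
  "rank n k m \<alpha> \<pi> x \<theta> = 1 + card {j \<in> {1..m-1}.
      prec_pi \<pi> (refvar n k \<alpha> x \<theta> 0) 0 (refvar n k \<alpha> x \<theta> j) j}"

text \<open>The uniform distribution on this finite set
  makes the signs i.i.d. Rademacher and pi uniform, independent of each other.\<close>
definition rand_space :: "nat \<Rightarrow> nat \<Rightarrow> ((nat \<Rightarrow> nat \<Rightarrow> real) \<times> (nat \<Rightarrow> nat)) set" where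
  "rand_space n m =
     {\<alpha>. \<forall>i j. \<alpha> i j \<in> {-1, 1} \<and> (\<alpha> i j \<noteq> 1 \<longrightarrow> i \<in> {1..n} \<and> j \<in> {1..m-1})}
     \<times> {\<pi>. \<pi> permutes {0..<m}}"

end

(*
  Reflecting any of the centred observations X_i - \<mu> leaves the joint law of the sample unchanged,
  since the X_i are independent and symmetric about \<mu>. So the probability is the same if the sample
  is first reflected by a uniformly random sign vector \<epsilon>. Absorbing \<epsilon> into the resampling signs \<alpha>
  turns (\<epsilon>, \<alpha>) into a uniformly random sign matrix with m columns, column 0 being \<epsilon>, and S_j(\<mu>)
  becomes the same function of column j for every j, including j = 0. Swapping columns 0 and c
  together with the tie-break priorities of \<pi> is a bijection of the randomization, so S_0 has the rank
  distribution of S_c. As the tie-broken ranks of S_0, ..., S_(m-1) are a permutation of 1, ..., m,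
  exactly r of them exceed m - r: for every fixed sample a fraction r/m of the randomizations gives
  R(\<mu>) > m - r.
*)

theory Submission
  imports Defs
begin

(* R(\<theta>) of the context is tiebreak_rank at c = 0 with V j = S_j(\<theta>). *)
definition tiebreak_rank :: "nat \<Rightarrow> (nat \<Rightarrow> real) \<Rightarrow> (nat \<Rightarrow> nat) \<Rightarrow> nat \<Rightarrow> nat" where
  "tiebreak_rank m V \<pi> c = 1 + card {j \<in> {0..<m} - {c}. prec_pi \<pi> (V c) c (V j) j}"

lemma prec_pi_trans: "prec_pi \<pi> a i b j \<Longrightarrow> prec_pi \<pi> b j c l \<Longrightarrow> prec_pi \<pi> a i c l"
  unfolding prec_pi_def by auto

lemma prec_pi_irrefl: "\<not> prec_pi \<pi> a i a i"
  unfolding prec_pi_def by auto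

lemma prec_pi_total: "\<pi> i \<noteq> \<pi> j \<Longrightarrow> prec_pi \<pi> a i b j \<or> prec_pi \<pi> b j a i"
  unfolding prec_pi_def by auto

lemma tiebreak_rank_less:
  assumes "d < m" and "prec_pi \<pi> (V c) c (V d) d"
  shows "tiebreak_rank m V \<pi> d < tiebreak_rank m V \<pi> c"
proof -
  let ?above = "\<lambda>c. {j \<in> {0..<m} - {c}. prec_pi \<pi> (V c) c (V j) j}"
  have "insert d (?above d) \<subseteq> ?above c"
    using assms prec_pi_trans[of \<pi> "V c" c "V d" d] prec_pi_irrefl[of \<pi> "V c" c] by auto
  then have "card (insert d (?above d)) \<le> card (?above c)"
    by (intro card_mono) auto
  then show ?thesis
    unfolding tiebreak_rank_def by simp
qed

lemma tiebreak_rank_le: "tiebreak_rank m V \<pi> c \<le> m" if "c < m"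
proof -
  have "card {j \<in> {0..<m} - {c}. prec_pi \<pi> (V c) c (V j) j} \<le> card ({0..<m} - {c})"
    by (intro card_mono) auto
  with that show ?thesis
    unfolding tiebreak_rank_def by simp
qed

lemma bij_betw_tiebreak_rank:
  assumes "inj_on \<pi> {0..<m}"
  shows "bij_betw (tiebreak_rank m V \<pi>) {0..<m} {1..m}"
proof -
  have "inj_on (tiebreak_rank m V \<pi>) {0..<m}"
  proof (rule inj_onI, rule ccontr)
    fix c d assume c: "c \<in> {0..<m}" and d: "d \<in> {0..<m}" and "c \<noteq> d"
      and eq: "tiebreak_rank m V \<pi> c = tiebreak_rank m V \<pi> d"
    then have "\<pi> c \<noteq> \<pi> d"
      using assms by (auto dest: inj_onD)
    then consider "prec_pi \<pi> (V c) c (V d) d" | "prec_pi \<pi> (V d) d (V c) c"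
      using prec_pi_total by blast
    then show False
      using tiebreak_rank_less[of d m \<pi> V c] tiebreak_rank_less[of c m \<pi> V d] c d eq by cases auto
  qed
  moreover have "tiebreak_rank m V \<pi> ` {0..<m} \<subseteq> {1..m}"
    using tiebreak_rank_le by (auto simp: tiebreak_rank_def)
  ultimately show ?thesis
    unfolding bij_betw_def by (simp add: card_image card_subset_eq)
qed

lemma card_tiebreak_rank_greater:
  assumes "inj_on \<pi> {0..<m}" and "r \<le> m"
  shows "card {c \<in> {0..<m}. m - r < tiebreak_rank m V \<pi> c} = r"
proof -
  have "bij_betw (tiebreak_rank m V \<pi>) {c \<in> {0..<m}. m - r < tiebreak_rank m V \<pi> c} {v \<in> {1..m}. m - r < v}"
    using bij_betw_tiebreak_rank[OF assms(1)] by (rule bij_betw_Collect) simp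
  moreover have "{v \<in> {1..m}. m - r < v} = {m - r<..m}"
    by auto
  ultimately show ?thesis
    using assms(2) by (simp add: bij_betw_same_card)
qed

lemma tiebreak_rank_permute:
  assumes "\<tau> permutes {0..<m}" and "c < m"
  shows "tiebreak_rank m (V \<circ> \<tau>) (\<pi> \<circ> \<tau>) c = tiebreak_rank m V \<pi> (\<tau> c)"
proof -
  have "\<tau> c < m"
    using assms permutes_in_image[of \<tau> "{0..<m}" c] by simp
  with assms have "bij_betw \<tau> ({0..<m} - {c}) ({0..<m} - {\<tau> c})"
    by (intro bij_betw_DiffI permutes_imp_bij) auto
  then have "bij_betw \<tau> {j \<in> {0..<m} - {c}. prec_pi \<pi> (V (\<tau> c)) (\<tau> c) (V (\<tau> j)) (\<tau> j)}
      {j \<in> {0..<m} - {\<tau> c}. prec_pi \<pi> (V (\<tau> c)) (\<tau> c) (V j) j}"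
    by (rule bij_betw_Collect) simp
  then show ?thesis
    unfolding tiebreak_rank_def by (simp add: prec_pi_def bij_betw_same_card)
qed

lemma card_tiebreak_rank_greater_exchangeable:
  fixes V :: "'t \<Rightarrow> nat \<Rightarrow> real" and P :: "'t \<Rightarrow> nat \<Rightarrow> nat" and h :: "nat \<Rightarrow> 't \<Rightarrow> 't"
  assumes "finite T" and "r \<le> m"
    and "\<And>t. t \<in> T \<Longrightarrow> inj_on (P t) {0..<m}"
    and "\<And>c. c < m \<Longrightarrow> bij_betw (h c) T T"
    and "\<And>c t. c < m \<Longrightarrow> t \<in> T \<Longrightarrow> tiebreak_rank m (V (h c t)) (P (h c t)) 0 = tiebreak_rank m (V t) (P t) c"
  shows "m * card {t \<in> T. m - r < tiebreak_rank m (V t) (P t) 0} = r * card T"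
proof -
  let ?G = "\<lambda>t c. m - r < tiebreak_rank m (V t) (P t) c"
  have "card {t \<in> T. ?G t 0} = card {t \<in> T. ?G t c}" if "c < m" for c
  proof -
    have "bij_betw (h c) {t \<in> T. ?G (h c t) 0} {t \<in> T. ?G t 0}"
      using assms(4)[OF that] by (rule bij_betw_Collect) simp
    moreover have "{t \<in> T. ?G (h c t) 0} = {t \<in> T. ?G t c}"
      using assms(5)[OF that] by auto
    ultimately show ?thesis
      by (simp add: bij_betw_same_card)
  qed
  then have "(\<Sum>c<m. card {t \<in> T. ?G t c}) = (\<Sum>c<m. card {t \<in> T. ?G t 0})"
    by (intro sum.cong) auto
  then have "m * card {t \<in> T. ?G t 0} = (\<Sum>c<m. card {t \<in> T. ?G t c})"
    by simp
  also have "\<dots> = (\<Sum>c<m. \<Sum>t\<in>T. of_bool (?G t c))"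
    using assms(1) by (simp add: Int_def)
  also have "\<dots> = (\<Sum>t\<in>T. \<Sum>c<m. of_bool (?G t c))"
    by (rule sum.swap)
  also have "\<dots> = (\<Sum>t\<in>T. card {c \<in> {0..<m}. ?G t c})"
    by (simp add: lessThan_atLeast0 Int_def)
  also have "\<dots> = (\<Sum>t\<in>T. r)"
    using assms(2,3) by (intro sum.cong refl card_tiebreak_rank_greater)
  finally show ?thesis
    by simp
qed

definition sign_matrices :: "nat \<Rightarrow> nat \<Rightarrow> (nat \<Rightarrow> nat \<Rightarrow> real) set" where
  "sign_matrices n m = {\<sigma>. \<forall>i j. \<sigma> i j \<in> {-1, 1} \<and> (\<sigma> i j \<noteq> 1 \<longrightarrow> i \<in> {1..n} \<and> j < m)}"

definition reflect :: "real \<Rightarrow> (nat \<Rightarrow> real) \<Rightarrow> (nat \<Rightarrow> real) \<Rightarrow> nat \<Rightarrow> real" where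
  "reflect \<mu> \<epsilon> x i = \<mu> + \<epsilon> i * (x i - \<mu>)"

definition column_refvar ::
    "nat \<Rightarrow> nat \<Rightarrow> real \<Rightarrow> (nat \<Rightarrow> real) \<Rightarrow> (nat \<Rightarrow> nat \<Rightarrow> real) \<Rightarrow> nat \<Rightarrow> real" where
  "column_refvar n k \<mu> x \<sigma> j = mom n k (reflect \<mu> (\<lambda>i. \<sigma> i j) x) - \<mu>"

lemma finite_sign_matrices: "finite (sign_matrices n m)"
proof -
  let ?D = "{1..n} \<times> {0..<m}"
  have "sign_matrices n m \<subseteq> curry ` {f. \<forall>p. (p \<in> ?D \<longrightarrow> f p \<in> {-1, 1}) \<and> (p \<notin> ?D \<longrightarrow> f p = 1)}"
  proof
    fix \<sigma> assume "\<sigma> \<in> sign_matrices n m"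
    then have "case_prod \<sigma> \<in> {f. \<forall>p. (p \<in> ?D \<longrightarrow> f p \<in> {-1, 1}) \<and> (p \<notin> ?D \<longrightarrow> f p = 1)}"
      unfolding sign_matrices_def by fastforce
    then show "\<sigma> \<in> curry ` {f. \<forall>p. (p \<in> ?D \<longrightarrow> f p \<in> {-1, 1}) \<and> (p \<notin> ?D \<longrightarrow> f p = 1)}"
      by (rule rev_image_eqI) simp
  qed
  then show ?thesis
    by (rule finite_subset) (intro finite_imageI finite_set_of_finite_funs; simp)
qed

lemma permute_columns_sign_matrices:
  assumes "\<tau> permutes {0..<m}" and "\<sigma> \<in> sign_matrices n m"
  shows "(\<lambda>i j. \<sigma> i (\<tau> j)) \<in> sign_matrices n m"
proof -
  have "\<tau> j < m \<longleftrightarrow> j < m" for j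
    using permutes_in_image[OF assms(1), of j] by simp
  with assms(2) show ?thesis
    unfolding sign_matrices_def by fastforce
qed

lemma card_tiebreak_rank_greater_sign_matrices:
  assumes "r \<le> m"
  shows "m * card {t \<in> sign_matrices n m \<times> {\<pi>. \<pi> permutes {0..<m}}.
                   m - r < tiebreak_rank m (column_refvar n k \<mu> x (fst t)) (snd t) 0}
         = r * card (sign_matrices n m \<times> {\<pi>. \<pi> permutes {0..<m}})"
proof -
  let ?T = "sign_matrices n m \<times> {\<pi>. \<pi> permutes {0..<m}}"
  define h :: "nat \<Rightarrow> (nat \<Rightarrow> nat \<Rightarrow> real) \<times> (nat \<Rightarrow> nat) \<Rightarrow> _"
    where "h c = (\<lambda>(\<sigma>, \<pi>). (\<lambda>i j. \<sigma> i (Transposition.transpose 0 c j), \<pi> \<circ> Transposition.transpose 0 c))"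
    for c :: nat
  have \<tau>: "Transposition.transpose 0 c permutes {0..<m}" if "c < m" for c
    using that by (intro permutes_swap_id) auto
  have "bij_betw (h c) ?T ?T" if "c < m" for c
    using \<tau>[OF that] by (intro bij_betw_byWitness[where f' = "h c"])
      (auto simp: h_def comp_assoc intro: permute_columns_sign_matrices permutes_compose)
  moreover have "tiebreak_rank m (column_refvar n k \<mu> x (fst (h c t))) (snd (h c t)) 0
      = tiebreak_rank m (column_refvar n k \<mu> x (fst t)) (snd t) c" if "c < m" for c t
  proof -
    have "column_refvar n k \<mu> x (fst (h c t)) = column_refvar n k \<mu> x (fst t) \<circ> Transposition.transpose 0 c"
      by (auto simp: h_def column_refvar_def split: prod.split)
    then show ?thesis
      using tiebreak_rank_permute[OF \<tau>[OF that], of 0] that by (auto simp: h_def split: prod.split)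
  qed
  ultimately show ?thesis
    using assms finite_sign_matrices
    by (intro card_tiebreak_rank_greater_exchangeable[where h = h]) (auto simp: permutes_inj_on finite_permutations)
qed

definition sign_vectors :: "nat \<Rightarrow> (nat \<Rightarrow> real) set" where
  "sign_vectors n = {\<epsilon>. \<forall>i. \<epsilon> i \<in> {-1, 1} \<and> (\<epsilon> i \<noteq> 1 \<longrightarrow> i \<in> {1..n})}"

definition resampling_signs :: "nat \<Rightarrow> nat \<Rightarrow> (nat \<Rightarrow> nat \<Rightarrow> real) set" where
  "resampling_signs n m = {\<alpha>. \<forall>i j. \<alpha> i j \<in> {-1, 1} \<and> (\<alpha> i j \<noteq> 1 \<longrightarrow> i \<in> {1..n} \<and> j \<in> {1..m-1})}"

(* Reflecting a sample by \<epsilon> and then resampling it with column j of \<alpha> is reflecting it by column j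
   of combine_signs m \<epsilon> \<alpha>; column 0 is \<epsilon> itself since \<alpha> i 0 = 1. *)
definition combine_signs :: "nat \<Rightarrow> (nat \<Rightarrow> real) \<Rightarrow> (nat \<Rightarrow> nat \<Rightarrow> real) \<Rightarrow> nat \<Rightarrow> nat \<Rightarrow> real" where
  "combine_signs m \<epsilon> \<alpha> i j = (if j < m then \<epsilon> i * \<alpha> i j else 1)"

lemma rand_space_eq: "rand_space n m = resampling_signs n m \<times> {\<pi>. \<pi> permutes {0..<m}}"
  unfolding rand_space_def resampling_signs_def ..

lemma sign_vectors_square:
  assumes "\<epsilon> \<in> sign_vectors n"
  shows "\<epsilon> i * \<epsilon> i = 1"
proof -
  have "\<epsilon> i \<in> {-1, 1}"
    using assms unfolding sign_vectors_def by blast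
  then show ?thesis
    by auto
qed

lemma sign_matrices_square:
  assumes "\<sigma> \<in> sign_matrices n m"
  shows "\<sigma> i j * \<sigma> i j = 1"
proof -
  have "\<sigma> i j \<in> {-1, 1}"
    using assms unfolding sign_matrices_def by blast
  then show ?thesis
    by auto
qed

lemma sign_matrices_trivial_column: "\<sigma> \<in> sign_matrices n m \<Longrightarrow> m \<le> j \<Longrightarrow> \<sigma> i j = 1"
  unfolding sign_matrices_def by fastforce

lemma resampling_signs_trivial_column:
  "\<alpha> \<in> resampling_signs n m \<Longrightarrow> j = 0 \<or> m \<le> j \<Longrightarrow> \<alpha> i j = 1"
  unfolding resampling_signs_def by fastforce

lemma combine_signs_in_sign_matrices:
  assumes "\<epsilon> \<in> sign_vectors n" and "\<alpha> \<in> resampling_signs n m"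
  shows "combine_signs m \<epsilon> \<alpha> \<in> sign_matrices n m"
  unfolding sign_matrices_def
proof (intro CollectI allI conjI impI)
  fix i j
  have \<epsilon>: "\<epsilon> i \<in> {-1, 1}" "\<epsilon> i \<noteq> 1 \<longrightarrow> i \<in> {1..n}"
    and \<alpha>: "\<alpha> i j \<in> {-1, 1}" "\<alpha> i j \<noteq> 1 \<longrightarrow> i \<in> {1..n}"
    using assms unfolding sign_vectors_def resampling_signs_def by blast+
  then show "combine_signs m \<epsilon> \<alpha> i j \<in> {-1, 1}"
    unfolding combine_signs_def by auto
  assume "combine_signs m \<epsilon> \<alpha> i j \<noteq> 1"
  with \<epsilon> \<alpha> show "i \<in> {1..n}" and "j < m"
    unfolding combine_signs_def by (auto split: if_splits)
qed

lemma split_sign_matrix: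
  assumes "\<sigma> \<in> sign_matrices n m" and "0 < m"
  shows "(\<lambda>i. \<sigma> i 0) \<in> sign_vectors n"
    and "(\<lambda>i j. if j < m then \<sigma> i 0 * \<sigma> i j else 1) \<in> resampling_signs n m"
proof -
  have \<sigma>: "\<sigma> i j \<in> {-1, 1}" "\<sigma> i j \<noteq> 1 \<longrightarrow> i \<in> {1..n} \<and> j < m" for i j
    using assms(1) unfolding sign_matrices_def by blast+
  then show "(\<lambda>i. \<sigma> i 0) \<in> sign_vectors n"
    unfolding sign_vectors_def by blast
  show "(\<lambda>i j. if j < m then \<sigma> i 0 * \<sigma> i j else 1) \<in> resampling_signs n m"
    unfolding resampling_signs_def
  proof (intro CollectI allI conjI impI)
    fix i j
    show "(if j < m then \<sigma> i 0 * \<sigma> i j else 1) \<in> {-1, 1}"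
      using \<sigma>(1)[of i 0] \<sigma>(1)[of i j] by auto
    assume ne: "(if j < m then \<sigma> i 0 * \<sigma> i j else 1) \<noteq> 1"
    show "i \<in> {1..n}"
      using ne \<sigma>(2)[of i 0] \<sigma>(2)[of i j] by (auto split: if_splits)
    have "j \<noteq> 0"
      using ne sign_matrices_square[OF assms(1), of i 0] by (cases j) (auto split: if_splits)
    with ne show "j \<in> {1..m - 1}"
      by (auto split: if_splits)
  qed
qed

lemma bij_betw_combine_signs:
  assumes "0 < m"
  shows "bij_betw (\<lambda>(\<epsilon>, \<alpha>). combine_signs m \<epsilon> \<alpha>)
           (sign_vectors n \<times> resampling_signs n m) (sign_matrices n m)"
proof (rule bij_betw_byWitness[where f' = "\<lambda>\<sigma>. (\<lambda>i. \<sigma> i 0, \<lambda>i j. if j < m then \<sigma> i 0 * \<sigma> i j else 1)"])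
  show "\<forall>p\<in>sign_vectors n \<times> resampling_signs n m.
          (\<lambda>\<sigma>. (\<lambda>i. \<sigma> i 0, \<lambda>i j. if j < m then \<sigma> i 0 * \<sigma> i j else 1)) ((\<lambda>(\<epsilon>, \<alpha>). combine_signs m \<epsilon> \<alpha>) p) = p"
    using assms by (auto simp: combine_signs_def fun_eq_iff mult.assoc[symmetric] not_less
        sign_vectors_square resampling_signs_trivial_column)
  show "\<forall>\<sigma>\<in>sign_matrices n m.
          (\<lambda>(\<epsilon>, \<alpha>). combine_signs m \<epsilon> \<alpha>) (\<lambda>i. \<sigma> i 0, \<lambda>i j. if j < m then \<sigma> i 0 * \<sigma> i j else 1) = \<sigma>"
    by (auto simp: combine_signs_def fun_eq_iff mult.assoc[symmetric] not_less
        sign_matrices_square sign_matrices_trivial_column)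
  show "(\<lambda>(\<epsilon>, \<alpha>). combine_signs m \<epsilon> \<alpha>) ` (sign_vectors n \<times> resampling_signs n m) \<subseteq> sign_matrices n m"
    using combine_signs_in_sign_matrices by auto
  show "(\<lambda>\<sigma>. (\<lambda>i. \<sigma> i 0, \<lambda>i j. if j < m then \<sigma> i 0 * \<sigma> i j else 1)) ` sign_matrices n m
          \<subseteq> sign_vectors n \<times> resampling_signs n m"
    using assms split_sign_matrix by auto
qed

lemma rank_reflect:
  assumes "\<alpha> \<in> resampling_signs n m" and "0 < m"
  shows "rank n k m \<alpha> \<pi> (reflect \<mu> \<epsilon> x) \<mu> = tiebreak_rank m (column_refvar n k \<mu> x (combine_signs m \<epsilon> \<alpha>)) \<pi> 0"
proof -
  have "resample \<alpha> (reflect \<mu> \<epsilon> x) \<mu> j = reflect \<mu> (\<lambda>i. combine_signs m \<epsilon> \<alpha> i j) x" if "j < m" for j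
    using that resampling_signs_trivial_column[OF assms(1), of 0]
    by (auto simp: resample_def reflect_def combine_signs_def fun_eq_iff algebra_simps)
  then have "refvar n k \<alpha> (reflect \<mu> \<epsilon> x) \<mu> j = column_refvar n k \<mu> x (combine_signs m \<epsilon> \<alpha>) j" if "j < m" for j
    using that by (simp add: refvar_def column_refvar_def)
  moreover have "{0..<m} - {0} = {1..m - 1}"
    using assms(2) by auto
  ultimately have "{j \<in> {1..m - 1}. prec_pi \<pi> (refvar n k \<alpha> (reflect \<mu> \<epsilon> x) \<mu> 0) 0 (refvar n k \<alpha> (reflect \<mu> \<epsilon> x) \<mu> j) j}
      = {j \<in> {0..<m} - {0}. prec_pi \<pi> (column_refvar n k \<mu> x (combine_signs m \<epsilon> \<alpha>) 0) 0
                                      (column_refvar n k \<mu> x (combine_signs m \<epsilon> \<alpha>) j) j}"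
    using assms(2) by auto
  then show ?thesis
    unfolding rank_def tiebreak_rank_def by simp
qed

lemma card_rank_reflect_greater:
  assumes "0 < m" and "r \<le> m"
  shows "m * card {p \<in> sign_vectors n \<times> rand_space n m.
                   m - r < rank n k m (fst (snd p)) (snd (snd p)) (reflect \<mu> (fst p) x) \<mu>}
         = r * card (sign_vectors n \<times> rand_space n m)"
proof -
  let ?E = "sign_vectors n" and ?A = "resampling_signs n m" and ?P = "{\<pi>. \<pi> permutes {0..<m}}"
  let ?g = "\<lambda>(\<epsilon>, \<alpha>, \<pi>). (combine_signs m \<epsilon> \<alpha>, \<pi>)"
  have "bij_betw (\<lambda>(\<epsilon>, \<alpha>, \<pi>). ((\<epsilon>, \<alpha>), \<pi>)) (?E \<times> (?A \<times> ?P)) ((?E \<times> ?A) \<times> ?P)"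
    by (rule bij_betw_byWitness[where f' = "\<lambda>((\<epsilon>, \<alpha>), \<pi>). (\<epsilon>, \<alpha>, \<pi>)"]) auto
  then have "bij_betw (map_prod (\<lambda>(\<epsilon>, \<alpha>). combine_signs m \<epsilon> \<alpha>) id \<circ> (\<lambda>(\<epsilon>, \<alpha>, \<pi>). ((\<epsilon>, \<alpha>), \<pi>)))
      (?E \<times> (?A \<times> ?P)) (sign_matrices n m \<times> ?P)"
    by (rule bij_betw_trans) (intro bij_betw_map_prod bij_betw_combine_signs assms(1) bij_betw_id)
  then have bij: "bij_betw ?g (?E \<times> rand_space n m) (sign_matrices n m \<times> ?P)"
    unfolding rand_space_eq by (simp add: comp_def case_prod_unfold)
  have "bij_betw ?g {p \<in> ?E \<times> rand_space n m. m - r < rank n k m (fst (snd p)) (snd (snd p)) (reflect \<mu> (fst p) x) \<mu>}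
      {t \<in> sign_matrices n m \<times> ?P. m - r < tiebreak_rank m (column_refvar n k \<mu> x (fst t)) (snd t) 0}"
    using bij by (rule bij_betw_Collect) (auto simp: rand_space_eq rank_reflect assms(1))
  then show ?thesis
    using card_tiebreak_rank_greater_sign_matrices[OF assms(2)] bij_betw_same_card[OF bij]
    by (simp add: bij_betw_same_card)
qed

lemma mom_cong:
  assumes "\<And>i. i \<in> {1..n} \<Longrightarrow> x i = x' i"
  shows "mom n k x = mom n k x'"
proof -
  have "(\<Sum>i\<in>block n k l. x i) = (\<Sum>i\<in>block n k l. x' i)" for l
    using assms by (intro sum.cong) (auto simp: block_def)
  then show ?thesis
    unfolding mom_def by simp
qed

lemma rank_cong:
  assumes "\<And>i. i \<in> {1..n} \<Longrightarrow> x i = x' i"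
  shows "rank n k m \<alpha> \<pi> x \<theta> = rank n k m \<alpha> \<pi> x' \<theta>"
proof -
  have "refvar n k \<alpha> x \<theta> j = refvar n k \<alpha> x' \<theta> j" for j
    unfolding refvar_def using assms by (intro arg_cong[where f = "\<lambda>z. z - \<theta>"] mom_cong) (simp add: resample_def)
  then show ?thesis
    unfolding rank_def by simp
qed

lemma finite_sign_vectors: "finite (sign_vectors n)"
proof -
  have "sign_vectors n \<subseteq> {\<epsilon>. \<forall>i. (i \<in> {1..n} \<longrightarrow> \<epsilon> i \<in> {-1, 1}) \<and> (i \<notin> {1..n} \<longrightarrow> \<epsilon> i = 1)}"
    unfolding sign_vectors_def by auto
  then show ?thesis
    by (rule finite_subset) (intro finite_set_of_finite_funs; simp)
qed

lemma finite_rand_space: "finite (rand_space n m)"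
proof -
  have "resampling_signs n m \<subseteq> sign_matrices n m"
    unfolding resampling_signs_def sign_matrices_def by fastforce
  then show ?thesis
    unfolding rand_space_eq
    by (intro finite_cartesian_product finite_permutations) (auto intro: finite_subset finite_sign_matrices)
qed

lemma rand_space_nonempty: "rand_space n m \<noteq> {}"
proof -
  have "((\<lambda>_ _. 1), id) \<in> rand_space n m"
    unfolding rand_space_def by (simp add: permutes_id)
  then show ?thesis
    by blast
qed

lemma sign_vectors_nonempty: "sign_vectors n \<noteq> {}"
proof -
  have "(\<lambda>_. 1) \<in> sign_vectors n"
    unfolding sign_vectors_def by simp
  then show ?thesis
    by blast
qed

lemma sorted_nth_le_iff:
  fixes zs :: "'a::linorder list"
  assumes "sorted zs" and "t < length zs"
  shows "zs ! t \<le> a \<longleftrightarrow> t < length (filter (\<lambda>z. z \<le> a) zs)"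
proof
  assume "zs ! t \<le> a"
  then have "{0..t} \<subseteq> {i. i < length zs \<and> zs ! i \<le> a}"
    using assms by (auto intro: order_trans[OF sorted_nth_mono])
  then have "card {0..t} \<le> card {i. i < length zs \<and> zs ! i \<le> a}"
    by (intro card_mono) auto
  then show "t < length (filter (\<lambda>z. z \<le> a) zs)"
    by (simp add: length_filter_conv_card)
next
  assume less: "t < length (filter (\<lambda>z. z \<le> a) zs)"
  show "zs ! t \<le> a"
  proof (rule ccontr)
    assume "\<not> zs ! t \<le> a"
    then have "{i. i < length zs \<and> zs ! i \<le> a} \<subseteq> {0..<t}"
      using assms(1) by auto (meson not_less order_trans sorted_nth_mono)
    then have "card {i. i < length zs \<and> zs ! i \<le> a} \<le> t"
      using card_mono[of "{0..<t}"] by fastforce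
    with less show False
      by (simp add: length_filter_conv_card)
  qed
qed

lemma borel_measurable_sort_nth:
  fixes f :: "'i \<Rightarrow> 'a \<Rightarrow> real"
  assumes "\<And>l. l \<in> set ls \<Longrightarrow> f l \<in> borel_measurable M" and "t < length ls"
  shows "(\<lambda>w. sort (map (\<lambda>l. f l w) ls) ! t) \<in> borel_measurable M"
proof (rule borel_measurable_iff_le[THEN iffD2], rule allI)
  fix a
  have [measurable]: "\<And>i. i < length ls \<Longrightarrow> f (ls ! i) \<in> borel_measurable M"
    using assms(1) by simp
  have "length (filter (\<lambda>z. z \<le> a) (sort (map (\<lambda>l. f l w) ls))) = length (filter (\<lambda>l. f l w \<le> a) ls)" for w
    by (simp add: filter_sort filter_map comp_def)
  then have "sort (map (\<lambda>l. f l w) ls) ! t \<le> a \<longleftrightarrow> t < card {i. i < length ls \<and> f (ls ! i) w \<le> a}" for w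
    using assms(2) by (simp add: sorted_nth_le_iff length_filter_conv_card)
  moreover have "{w \<in> space M. t < card {i. i < length ls \<and> f (ls ! i) w \<le> a}} \<in> sets M"
    by measurable
  ultimately show "{w \<in> space M. sort (map (\<lambda>l. f l w) ls) ! t \<le> a} \<in> sets M"
    by simp
qed

lemma borel_measurable_mom:
  assumes "1 \<le> k" and "\<And>i. i \<in> {1..n} \<Longrightarrow> (\<lambda>w. x w i) \<in> borel_measurable M"
  shows "(\<lambda>w. mom n k (x w)) \<in> borel_measurable M"
proof -
  define F where "F l w = (\<Sum>i\<in>block n k l. x w i) / real (card (block n k l))" for l w
  define t where "t = (if even k then k div 2 - 1 else k div 2)"
  have "F l \<in> borel_measurable M" for l
  proof -
    have "block n k l \<subseteq> {1..n}"
      unfolding block_def by auto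
    then have [measurable]: "i \<in> block n k l \<Longrightarrow> (\<lambda>w. x w i) \<in> borel_measurable M" for i
      using assms(2) by auto
    show ?thesis
      unfolding F_def by measurable
  qed
  moreover have "t < length [1..<k + 1]"
    using assms(1) unfolding t_def by auto
  ultimately have "(\<lambda>w. sort (map (\<lambda>l. F l w) [1..<k + 1]) ! t) \<in> borel_measurable M"
    by (intro borel_measurable_sort_nth)
  moreover have "mom n k (x w) = sort (map (\<lambda>l. F l w) [1..<k + 1]) ! t" for w
    unfolding mom_def med_def F_def t_def by (simp add: Let_def)
  ultimately show ?thesis
    by simp
qed

lemma measurable_rank:
  fixes x :: "'b \<Rightarrow> nat \<Rightarrow> real" and \<alpha> :: "'b \<Rightarrow> nat \<Rightarrow> nat \<Rightarrow> real" and \<pi> :: "'b \<Rightarrow> nat \<Rightarrow> nat"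
  assumes "1 \<le> k" and "\<And>i. i \<in> {1..n} \<Longrightarrow> (\<lambda>w. x w i) \<in> borel_measurable M"
    and "\<And>i j. (\<lambda>w. \<alpha> w i j) \<in> borel_measurable M" and "\<And>j. (\<lambda>w. \<pi> w j) \<in> borel_measurable M"
  shows "(\<lambda>w. rank n k m (\<alpha> w) (\<pi> w) (x w) \<theta>) \<in> M \<rightarrow>\<^sub>M count_space UNIV"
proof -
  have [measurable]: "(\<lambda>w. refvar n k (\<alpha> w) (x w) \<theta> j) \<in> borel_measurable M" for j
  proof -
    have [measurable]: "(\<lambda>w. x w i) \<in> borel_measurable M" if "i \<in> {1..n}" for i
      using assms(2) that .
    have [measurable]: "(\<lambda>w. \<alpha> w i j) \<in> borel_measurable M" for i
      using assms(3) .
    have "(\<lambda>w. resample (\<alpha> w) (x w) \<theta> j i) \<in> borel_measurable M" if "i \<in> {1..n}" for i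
      using that unfolding resample_def by measurable
    then show ?thesis
      unfolding refvar_def using borel_measurable_mom[OF assms(1)] by measurable
  qed
  have [measurable]: "Measurable.pred M (\<lambda>w. prec_pi (\<pi> w) (refvar n k (\<alpha> w) (x w) \<theta> 0) 0 (refvar n k (\<alpha> w) (x w) \<theta> j) j)"
    for j
    using assms(4)[measurable] unfolding prec_pi_def by measurable
  show ?thesis
    unfolding rank_def by measurable
qed

lemma (in prob_space) sum_prob_eq_const_count:
  assumes "finite I" and "\<And>i. i \<in> I \<Longrightarrow> A i \<in> events"
    and "\<And>\<omega>. \<omega> \<in> space M \<Longrightarrow> real (card {i \<in> I. \<omega> \<in> A i}) = c"
  shows "(\<Sum>i\<in>I. prob (A i)) = c"
proof -
  have "(\<Sum>i\<in>I. prob (A i)) = (\<Sum>i\<in>I. expectation (indicator (A i)))"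
    using assms(2) by simp
  also have "\<dots> = expectation (\<lambda>\<omega>. \<Sum>i\<in>I. indicator (A i) \<omega>)"
    using assms(2) by (subst Bochner_Integration.integral_sum) (auto simp: emeasure_eq_measure)
  also have "\<dots> = expectation (\<lambda>_. c)"
    using assms(1,3) by (intro Bochner_Integration.integral_cong) (auto simp: indicator_def Int_def)
  also have "\<dots> = c"
    by (simp add: prob_space)
  finally show ?thesis .
qed

lemma measure_pair_pmf_of_set:
  assumes "prob_space M" and "finite R" and "R \<noteq> {}"
    and "S \<in> sets (M \<Otimes>\<^sub>M measure_pmf (pmf_of_set R))"
  shows "measure (M \<Otimes>\<^sub>M measure_pmf (pmf_of_set R)) S
         = (\<Sum>q\<in>R. measure M ((\<lambda>\<omega>. (\<omega>, q)) -` S)) / card R"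
proof -
  interpret M: prob_space M
    by fact
  interpret pair_sigma_finite M "measure_pmf (pmf_of_set R)"
    by (intro pair_sigma_finite.intro M.sigma_finite_measure_axioms measure_pmf.sigma_finite_measure_axioms)
  have "emeasure (M \<Otimes>\<^sub>M measure_pmf (pmf_of_set R)) S
      = (\<integral>\<^sup>+q. emeasure M ((\<lambda>\<omega>. (\<omega>, q)) -` S) \<partial>measure_pmf (pmf_of_set R))"
    using assms(4) by (rule emeasure_pair_measure_alt2)
  also have "\<dots> = (\<Sum>q\<in>R. emeasure M ((\<lambda>\<omega>. (\<omega>, q)) -` S) * pmf (pmf_of_set R) q)"
    using assms(2,3) by (subst nn_integral_measure_pmf_finite) simp_all
  also have "\<dots> = (\<Sum>q\<in>R. ennreal (measure M ((\<lambda>\<omega>. (\<omega>, q)) -` S) / card R))"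
    using assms(2,3) by (intro sum.cong refl) (simp add: M.emeasure_eq_measure ennreal_mult''[symmetric])
  also have "\<dots> = ennreal (\<Sum>q\<in>R. measure M ((\<lambda>\<omega>. (\<omega>, q)) -` S) / card R)"
    by (rule sum_ennreal) simp
  finally show ?thesis
    by (simp add: measure_def sum_nonneg sum_divide_distrib)
qed

lemma distr_compose_eq:
  assumes "X \<in> borel_measurable M" and "Y \<in> borel_measurable M" and "g \<in> borel_measurable borel"
    and "distr M borel X = distr M borel Y"
  shows "distr M borel (\<lambda>\<omega>. g (X \<omega>)) = distr M borel (\<lambda>\<omega>. g (Y \<omega>))"
  using assms distr_distr[of g borel borel X M] distr_distr[of g borel borel Y M] by (simp add: comp_def)

lemma distr_reflect_eq_of_symmetric:
  fixes X Y :: "'a \<Rightarrow> real"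
  assumes "X \<in> borel_measurable M" and "Y \<in> borel_measurable M"
    and "distr M borel Y = distr M borel X"
    and "distr M borel (\<lambda>\<omega>. X \<omega> - \<mu>) = distr M borel (\<lambda>\<omega>. \<mu> - X \<omega>)"
  shows "distr M borel (\<lambda>\<omega>. 2 * \<mu> - Y \<omega>) = distr M borel Y"
proof -
  have "distr M borel (\<lambda>\<omega>. 2 * \<mu> - Y \<omega>) = distr M borel (\<lambda>\<omega>. 2 * \<mu> - X \<omega>)"
    using assms(1-3) by (intro distr_compose_eq[where g = "\<lambda>y. 2 * \<mu> - y"]) auto
  also have "\<dots> = distr M borel (\<lambda>\<omega>. \<mu> - (X \<omega> - \<mu>))"
    by (simp add: algebra_simps)
  also have "\<dots> = distr M borel (\<lambda>\<omega>. \<mu> - (\<mu> - X \<omega>))"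
    using assms(1,4) by (intro distr_compose_eq[where g = "\<lambda>z. \<mu> - z"]) auto
  also have "\<dots> = distr M borel Y"
    using assms(3) by simp
  finally show ?thesis .
qed

lemma measure_reflect_indep_vars:
  fixes X :: "nat \<Rightarrow> 'a \<Rightarrow> real"
  assumes "prob_space M" and "prob_space.indep_vars M (\<lambda>_. borel) X I" and "I \<noteq> {}"
    and "\<And>i. i \<in> I \<Longrightarrow> distr M borel (\<lambda>\<omega>. 2 * \<mu> - X i \<omega>) = distr M borel (X i)"
    and "\<And>i. i \<in> I \<Longrightarrow> \<epsilon> i \<in> {-1, 1}"
    and "B \<in> sets (\<Pi>\<^sub>M i\<in>I. borel)"
  shows "measure M {\<omega> \<in> space M. (\<lambda>i\<in>I. reflect \<mu> \<epsilon> (\<lambda>i. X i \<omega>) i) \<in> B}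
         = measure M {\<omega> \<in> space M. (\<lambda>i\<in>I. X i \<omega>) \<in> B}"
proof -
  interpret prob_space M
    by fact
  define Y where "Y i \<omega> = reflect \<mu> \<epsilon> (\<lambda>i. X i \<omega>) i" for i \<omega>
  have X: "X i \<in> borel_measurable M" if "i \<in> I" for i
    using assms(2) that unfolding indep_vars_def by auto
  then have Y: "Y i \<in> borel_measurable M" if "i \<in> I" for i
    using that unfolding Y_def reflect_def by measurable
  have "distr M borel (Y i) = distr M borel (X i)" if i: "i \<in> I" for i
  proof -
    consider "\<epsilon> i = 1" | "\<epsilon> i = -1"
      using assms(5)[OF i] by blast
    then show ?thesis
    proof cases
      case 1
      then have "Y i = X i"
        by (simp add: Y_def reflect_def fun_eq_iff)
      then show ?thesis
        by simp
    next
      case 2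
      then have "Y i = (\<lambda>\<omega>. 2 * \<mu> - X i \<omega>)"
        by (auto simp: Y_def reflect_def fun_eq_iff)
      then show ?thesis
        using assms(4)[OF i] by simp
    qed
  qed
  moreover have "indep_vars (\<lambda>_. borel) Y I"
    using assms(2) unfolding Y_def reflect_def
    by (rule indep_vars_compose2[where Y = "\<lambda>i x. \<mu> + \<epsilon> i * (x - \<mu>)"]) simp
  ultimately have "distr M (\<Pi>\<^sub>M i\<in>I. borel) (\<lambda>\<omega>. \<lambda>i\<in>I. Y i \<omega>) = (\<Pi>\<^sub>M i\<in>I. distr M borel (X i))"
    using indep_vars_iff_distr_eq_PiM'[OF assms(3) Y] by (auto intro: PiM_cong)
  also have "\<dots> = distr M (\<Pi>\<^sub>M i\<in>I. borel) (\<lambda>\<omega>. \<lambda>i\<in>I. X i \<omega>)"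
    using indep_vars_iff_distr_eq_PiM'[OF assms(3) X] assms(2) by simp
  finally have distr_eq: "distr M (\<Pi>\<^sub>M i\<in>I. borel) (\<lambda>\<omega>. \<lambda>i\<in>I. Y i \<omega>) = distr M (\<Pi>\<^sub>M i\<in>I. borel) (\<lambda>\<omega>. \<lambda>i\<in>I. X i \<omega>)" .
  have "measure M {\<omega> \<in> space M. (\<lambda>i\<in>I. Z i \<omega>) \<in> B} = measure (distr M (\<Pi>\<^sub>M i\<in>I. borel) (\<lambda>\<omega>. \<lambda>i\<in>I. Z i \<omega>)) B"
    if "\<And>i. i \<in> I \<Longrightarrow> Z i \<in> borel_measurable M" for Z
    using that assms(6) by (subst measure_distr) (auto intro!: measurable_restrict arg_cong[where f = "measure M"])
  from this[OF Y] this[OF X] distr_eq show ?thesis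
    unfolding Y_def by simp
qed

lemma reflect_1 [simp]: "reflect \<mu> (\<lambda>_. 1) x = x"
  by (simp add: reflect_def fun_eq_iff)

lemma prob_rank_reflect_eq:
  fixes X :: "nat \<Rightarrow> 'a \<Rightarrow> real"
  assumes "prob_space M" and "prob_space.indep_vars M (\<lambda>_. borel) X {1..n}" and "1 \<le> k" and "k \<le> n"
    and "\<And>i. i \<in> {1..n} \<Longrightarrow> distr M borel (\<lambda>\<omega>. 2 * \<mu> - X i \<omega>) = distr M borel (X i)"
    and "\<epsilon> \<in> sign_vectors n"
  shows "measure M {\<omega> \<in> space M. m - r < rank n k m \<alpha> \<pi> (reflect \<mu> \<epsilon> (\<lambda>i. X i \<omega>)) \<mu>}
       = measure M {\<omega> \<in> space M. m - r < rank n k m \<alpha> \<pi> (\<lambda>i. X i \<omega>) \<mu>}"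
proof -
  let ?B = "{y \<in> space (\<Pi>\<^sub>M i\<in>{1..n}. borel). m - r < rank n k m \<alpha> \<pi> y \<mu>}"
  have [measurable]: "(\<lambda>y. rank n k m \<alpha> \<pi> y \<mu>) \<in> (\<Pi>\<^sub>M i\<in>{1..n}. borel) \<rightarrow>\<^sub>M count_space UNIV"
    by (rule measurable_rank[OF assms(3)]) simp_all
  have "?B \<in> sets (\<Pi>\<^sub>M i\<in>{1..n}. borel)"
    by measurable
  moreover have "restrict y {1..n} \<in> ?B \<longleftrightarrow> m - r < rank n k m \<alpha> \<pi> y \<mu>" for y
    using rank_cong[of n "restrict y {1..n}" y] by (simp add: space_PiM)
  moreover have "\<epsilon> i \<in> {-1, 1}" for i
    using assms(6) unfolding sign_vectors_def by blast
  ultimately show ?thesis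
    using measure_reflect_indep_vars[OF assms(1,2) _ assms(5), of \<epsilon> ?B] assms(3,4) by simp
qed

lemma sum_prob_rank_reflect_greater:
  fixes X :: "nat \<Rightarrow> 'a \<Rightarrow> real"
  assumes "prob_space M" and "\<And>i. i \<in> {1..n} \<Longrightarrow> X i \<in> borel_measurable M"
    and "1 \<le> k" and "0 < m" and "r \<le> m"
  shows "(\<Sum>p\<in>sign_vectors n \<times> rand_space n m.
            measure M {\<omega> \<in> space M. m - r < rank n k m (fst (snd p)) (snd (snd p)) (reflect \<mu> (fst p) (\<lambda>i. X i \<omega>)) \<mu>})
         = r * card (sign_vectors n \<times> rand_space n m) / m"
proof (rule prob_space.sum_prob_eq_const_count[OF assms(1)])
  show "finite (sign_vectors n \<times> rand_space n m)"
    by (simp add: finite_sign_vectors finite_rand_space)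
  fix p
  have [measurable]: "X i \<in> borel_measurable M" if "i \<in> {1..n}" for i
    using assms(2) that .
  have "(\<lambda>\<omega>. rank n k m (fst (snd p)) (snd (snd p)) (reflect \<mu> (fst p) (\<lambda>i. X i \<omega>)) \<mu>) \<in> M \<rightarrow>\<^sub>M count_space UNIV"
    by (rule measurable_rank[OF assms(3)]) (simp_all add: reflect_def)
  then show "{\<omega> \<in> space M. m - r < rank n k m (fst (snd p)) (snd (snd p)) (reflect \<mu> (fst p) (\<lambda>i. X i \<omega>)) \<mu>}
      \<in> sets M"
    by measurable
next
  fix \<omega>
  show "real (card {p \<in> sign_vectors n \<times> rand_space n m.
      \<omega> \<in> {\<omega> \<in> space M. m - r < rank n k m (fst (snd p)) (snd (snd p)) (reflect \<mu> (fst p) (\<lambda>i. X i \<omega>)) \<mu>}})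
      = r * card (sign_vectors n \<times> rand_space n m) / m" if "\<omega> \<in> space M"
    using card_rank_reflect_greater[OF assms(4,5), of n k \<mu> "\<lambda>i. X i \<omega>"] that assms(4)
    by (simp add: field_simps flip: of_nat_mult)
qed

lemma prob_rank_greater_pair_pmf:
  fixes X :: "nat \<Rightarrow> 'a \<Rightarrow> real"
  assumes "prob_space M" and "\<And>i. i \<in> {1..n} \<Longrightarrow> X i \<in> borel_measurable M" and "1 \<le> k"
  shows "measure (M \<Otimes>\<^sub>M measure_pmf (pmf_of_set (rand_space n m)))
           {p \<in> space (M \<Otimes>\<^sub>M measure_pmf (pmf_of_set (rand_space n m))).
              m - r < rank n k m (fst (snd p)) (snd (snd p)) (\<lambda>i. X i (fst p)) \<mu>}
         = (\<Sum>q\<in>rand_space n m. measure M {\<omega> \<in> space M. m - r < rank n k m (fst q) (snd q) (\<lambda>i. X i \<omega>) \<mu>})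
           / card (rand_space n m)"
proof -
  let ?Q = "measure_pmf (pmf_of_set (rand_space n m))"
  have [measurable]: "X i \<in> borel_measurable M" if "i \<in> {1..n}" for i
    using assms(2) that .
  have Q: "(\<lambda>q. fst q i j) \<in> borel_measurable ?Q" "(\<lambda>q. snd q j) \<in> borel_measurable ?Q" for i j
    by simp_all
  have "(\<lambda>p. rank n k m (fst (snd p)) (snd (snd p)) (\<lambda>i. X i (fst p)) \<mu>) \<in> M \<Otimes>\<^sub>M ?Q \<rightarrow>\<^sub>M count_space UNIV"
    using assms(3) by (rule measurable_rank)
      (simp_all add: measurable_compose[OF measurable_snd Q(1)] measurable_compose[OF measurable_snd Q(2)])
  then show ?thesis
    by (subst measure_pair_pmf_of_set[OF assms(1) finite_rand_space rand_space_nonempty])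
      (auto simp: space_pair_measure intro!: sum.cong arg_cong[where f = "measure M"])
qed

theorem theorem2:
  fixes M :: "'a measure" and X :: "nat \<Rightarrow> 'a \<Rightarrow> real"
    and \<mu> :: real and n k m r :: nat
  assumes "prob_space M"
    and "prob_space.indep_vars M (\<lambda>_. borel) X {1..n}"
    and "\<And>i. i \<in> {1..n} \<Longrightarrow> distr M borel (X i) = distr M borel (X 1)"
    and "distr M borel (\<lambda>\<omega>. X 1 \<omega> - \<mu>) = distr M borel (\<lambda>\<omega>. \<mu> - X 1 \<omega>)"
    and "1 \<le> k" and "k \<le> n" and "1 \<le> r" and "r \<le> m"
  shows "measure (M \<Otimes>\<^sub>M measure_pmf (pmf_of_set (rand_space n m)))
           {p \<in> space (M \<Otimes>\<^sub>M measure_pmf (pmf_of_set (rand_space n m))).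
              rank n k m (fst (snd p)) (snd (snd p)) (\<lambda>i. X i (fst p)) \<mu> > m - r}
         = real r / real m"
proof -
  let ?E = "sign_vectors n" and ?R = "rand_space n m"
  define P where "P \<epsilon> q = measure M {\<omega> \<in> space M. m - r < rank n k m (fst q) (snd q) (reflect \<mu> \<epsilon> (\<lambda>i. X i \<omega>)) \<mu>}"
    for \<epsilon> q
  have X: "X i \<in> borel_measurable M" if "i \<in> {1..n}" for i
    using assms(2) that unfolding prob_space.indep_vars_def[OF assms(1)] by auto
  have symmetric: "distr M borel (\<lambda>\<omega>. 2 * \<mu> - X i \<omega>) = distr M borel (X i)" if "i \<in> {1..n}" for i
    using X[of 1] X[OF that] assms(3)[OF that] assms(4) assms(5,6)
    by (intro distr_reflect_eq_of_symmetric[where X = "X 1"]) auto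
  have "card ?E * (\<Sum>q\<in>?R. P (\<lambda>_. 1) q) = (\<Sum>\<epsilon>\<in>?E. \<Sum>q\<in>?R. P \<epsilon> q)"
    using prob_rank_reflect_eq[OF assms(1,2,5,6) symmetric] by (simp add: P_def)
  also have "\<dots> = card ?E * (r * card ?R / m)"
    using sum_prob_rank_reflect_greater[OF assms(1) X assms(5) _ assms(8), where \<mu> = \<mu>] assms(7,8)
    by (simp add: P_def sum.cartesian_product split_def card_cartesian_product)
  finally have "(\<Sum>q\<in>?R. P (\<lambda>_. 1) q) = r * card ?R / m"
    using finite_sign_vectors sign_vectors_nonempty by (simp only: mult_cancel_left) simp
  then show ?thesis
    using prob_rank_greater_pair_pmf[OF assms(1) X assms(5)] finite_rand_space rand_space_nonempty
    by (simp add: P_def)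
qed

end
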